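(* Let $q\in\mathbb{C}$ with $0<|q|<1$. Then: (i) for every integer $n\geq 1$, \[ \sum_{m=1}^{2n}(-1)^m q^{\frac{m(m-1)}{2}-mn} \;=\; 0; \] (ii) for every integer $n$ and every integer $r\geq 0$, \[ \sum_{m=1}^{\infty}\sum_{s=-r}^{r}(-1)^m q^{\frac{m(m-1)}{2}-m(n+s)}(1-q^m) \;=\; \sum_{m=1}^{\infty}\sum_{s=-r}^{r}(-1)^m q^{\frac{m(m-1)}{2}-m(-n+s)}(1-q^m). \]
   Context: In (ii) the inner sum runs over all integers $s$ with $-r\le s\le r$. *)

theory Defs
  imports Complex_Main
begin

end

theory Submission imports Defs begin

text \<open>Write \<open>G(N) = \<Sum>\<^bsub>m \<ge> 1\<^esub> (-1)^m q^(m(m-1)/2 - m N)\<close> (the series \<open>theta_tail q N\<close>).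
  The factor \<open>1 - q^m\<close> shifts \<open>N\<close> to \<open>N - 1\<close>, so the inner sum in (ii) is \<open>\<Sum>\<^sub>s D(n + s)\<close>
  with \<open>D(N) = G(N) - G(N - 1)\<close>. The substitution \<open>m \<mapsto> 2N + 1 - m\<close> preserves the exponent
  and flips the sign, which gives (i). Shifting \<open>m\<close> by \<open>2N + 1\<close> turns the series for \<open>N\<close> into
  minus the full series for \<open>-N - 1\<close>; as its first \<open>2N\<close> terms cancel by (i),
  \<open>G(N) + G(-N - 1) = -1\<close>. Hence \<open>D\<close> is even, and (ii) follows by reflecting \<open>s \<mapsto> -s\<close>.\<close>

lemma double_triangular_int: "2 * (x * (x - 1) div 2) = x * (x - 1)" for x :: int
  by simp

definition theta_term :: "'a :: {real_normed_field, banach} \<Rightarrow> int \<Rightarrow> int \<Rightarrow> 'a" where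
  "theta_term q N m = (-1) ^ nat m * q powi (m * (m - 1) div 2 - m * N)"

lemma theta_term_0 [simp]: "theta_term q N 0 = 1"
  by (simp add: theta_term_def)

lemma theta_term_succ:
  assumes "q \<noteq> 0" "m \<ge> 0"
  shows "theta_term q N (m + 1) = - theta_term q N m * q powi (m - N)"
proof -
  have exp: "(m + 1) * m div 2 - (m + 1) * N = (m * (m - 1) div 2 - m * N) + (m - N)"
    using double_triangular_int[of "m + 1"] double_triangular_int[of m]
    by (simp add: algebra_simps)
  have "nat (m + 1) = Suc (nat m)"
    using assms(2) by simp
  then show ?thesis
    using assms(1) by (simp add: theta_term_def exp power_int_add)
qed

lemma theta_term_reflect:
  assumes "N \<ge> 0" "m \<ge> 0"
  shows "theta_term q N (m + 2 * N + 1) = - theta_term q (- N - 1) m"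
proof -
  have exp: "(m + 2 * N + 1) * (m + 2 * N) div 2 - (m + 2 * N + 1) * N
           = m * (m - 1) div 2 - m * (- N - 1)"
    using double_triangular_int[of "m + 2 * N + 1"] double_triangular_int[of m]
    by (simp add: algebra_simps)
  have "nat (m + 2 * N + 1) = Suc (nat m + 2 * nat N)"
    using assms by simp
  then show ?thesis
    by (simp add: theta_term_def exp power_add)
qed

lemma theta_term_mult_one_minus_power:
  assumes "q \<noteq> 0"
  shows "theta_term q N m * (1 - q powi m) = theta_term q N m - theta_term q (N - 1) m"
proof -
  have "q powi (m * (m - 1) div 2 - m * N) * q powi m = q powi (m * (m - 1) div 2 - m * (N - 1))"
    using assms by (simp add: power_int_add [symmetric] algebra_simps)
  then show ?thesis
    by (simp add: theta_term_def algebra_simps)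
qed

lemma summable_theta_term:
  assumes "q \<noteq> 0" "norm q < 1"
  shows "summable (\<lambda>k. theta_term q N (int k))"
proof (rule summable_ratio_test [where c = "norm q" and N = "nat (N + 1)"])
  fix k assume "nat (N + 1) \<le> k"
  then have pos: "int k - N \<ge> 1" by linarith
  have "norm (q powi (int k - N)) = norm q ^ nat (int k - N)"
    using pos by (simp add: power_int_def norm_power)
  also have "\<dots> \<le> norm q"
    using power_decreasing [of 1 "nat (int k - N)" "norm q"] pos assms(2) by simp
  finally have "norm (q powi (int k - N)) \<le> norm q" .
  then have "norm (theta_term q N (int k)) * norm (q powi (int k - N))
      \<le> norm q * norm (theta_term q N (int k))"
    by (metis mult.commute mult_left_mono norm_ge_zero)
  then show "norm (theta_term q N (int (Suc k))) \<le> norm q * norm (theta_term q N (int k))"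
    using theta_term_succ [OF assms(1), of "int k" N] by (simp add: norm_mult add.commute)
qed (fact assms(2))

lemma theta_term_flip:
  assumes "0 \<le> m" "m \<le> 2 * N + 1"
  shows "theta_term q N (2 * N + 1 - m) = - theta_term q N m"
proof -
  have exp: "(2 * N + 1 - m) * (2 * N - m) div 2 - (2 * N + 1 - m) * N = m * (m - 1) div 2 - m * N"
    using double_triangular_int[of "2 * N + 1 - m"] double_triangular_int[of m]
    by (simp add: algebra_simps)
  have "nat (2 * N + 1 - m) + nat m = 2 * nat N + 1"
    using assms by linarith
  then have "even (nat (2 * N + 1 - m)) \<longleftrightarrow> odd (nat m)"
    by (metis even_add even_mult_iff even_numeral odd_one)
  then show ?thesis
    by (simp add: theta_term_def exp minus_one_power_iff)
qed

lemma sum_theta_term_eq_0: "(\<Sum>m\<in>{1..2 * n}. theta_term q n m) = 0"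
proof -
  have "(\<Sum>m\<in>{1..2 * n}. theta_term q n m) = (\<Sum>m\<in>{1..2 * n}. theta_term q n (2 * n + 1 - m))"
    by (rule sum.reindex_bij_witness [where i = "\<lambda>m. 2 * n + 1 - m" and j = "\<lambda>m. 2 * n + 1 - m"]) auto
  also have "\<dots> = - (\<Sum>m\<in>{1..2 * n}. theta_term q n m)"
    by (simp add: theta_term_flip sum_negf)
  finally show ?thesis
    by simp
qed

definition theta_tail :: "'a :: {real_normed_field, banach} \<Rightarrow> int \<Rightarrow> 'a" where
  "theta_tail q N = (\<Sum>k. theta_term q N (int (Suc k)))"

lemma summable_theta_tail:
  assumes "q \<noteq> 0" "norm q < 1"
  shows "summable (\<lambda>k. theta_term q N (int (Suc k)))"
  using summable_theta_term [OF assms, of N] by (rule summable_Suc_iff [THEN iffD2])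

lemma suminf_theta_term:
  assumes "q \<noteq> 0" "norm q < 1"
  shows "(\<Sum>k. theta_term q N (int k)) = 1 + theta_tail q N"
  using suminf_split_head [OF summable_theta_term [OF assms]]
  by (simp add: theta_tail_def)

lemma theta_tail_reflect_nonneg:
  assumes "q \<noteq> 0" "norm q < 1" "N \<ge> 0"
  shows "theta_tail q N + theta_tail q (- N - 1) = -1"
proof -
  have initial: "(\<Sum>k<2 * nat N. theta_term q N (int (Suc k))) = 0"
  proof -
    have "(\<Sum>k<2 * nat N. theta_term q N (int (Suc k))) = (\<Sum>m\<in>{1..2 * N}. theta_term q N m)"
      by (rule sum.reindex_bij_witness [where i = "\<lambda>m. nat m - 1" and j = "\<lambda>k. int (Suc k)"])
         (use assms(3) in auto)
    then show ?thesis
      by (simp add: sum_theta_term_eq_0)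
  qed
  have "theta_tail q N = (\<Sum>j. theta_term q N (int (Suc (j + 2 * nat N))))
      + (\<Sum>k<2 * nat N. theta_term q N (int (Suc k)))"
    unfolding theta_tail_def
    by (rule suminf_split_initial_segment [OF summable_theta_tail [OF assms(1,2)]])
  also have "\<dots> = (\<Sum>j. - theta_term q (- N - 1) (int j))"
  proof -
    have "int (Suc (j + 2 * nat N)) = int j + 2 * N + 1" for j
      using assms(3) by simp
    then show ?thesis
      by (simp only: initial theta_term_reflect [OF assms(3)] of_nat_0_le_iff add_0_right)
  qed
  also have "\<dots> = - (1 + theta_tail q (- N - 1))"
    by (simp add: suminf_minus summable_theta_term [OF assms(1,2)] suminf_theta_term [OF assms(1,2)])
  finally show ?thesis
    by simp
qed

lemma theta_tail_reflect:
  assumes "q \<noteq> 0" "norm q < 1"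
  shows "theta_tail q N + theta_tail q (- N - 1) = -1"
proof (cases "N \<ge> 0")
  case True
  then show ?thesis
    using theta_tail_reflect_nonneg [OF assms] by blast
next
  case False
  then show ?thesis
    using theta_tail_reflect_nonneg [OF assms, of "- N - 1"] by (simp add: add.commute)
qed

lemma sums_theta_term_mult_one_minus_power:
  assumes "q \<noteq> 0" "norm q < 1"
  shows "(\<lambda>k. theta_term q N (int (Suc k)) * (1 - q powi int (Suc k)))
           sums (theta_tail q N - theta_tail q (N - 1))"
  unfolding theta_term_mult_one_minus_power [OF assms(1)] theta_tail_def
  by (intro sums_diff summable_sums summable_theta_tail [OF assms])

lemma theta_tail_diff_minus:
  assumes "q \<noteq> 0" "norm q < 1"
  shows "theta_tail q (- N) - theta_tail q (- N - 1) = theta_tail q N - theta_tail q (N - 1)"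
  using theta_tail_reflect [OF assms, of N] theta_tail_reflect [OF assms, of "N - 1"]
  by (simp add: algebra_simps)

lemma suminf_sum_theta_term_mult_one_minus_power:
  assumes "q \<noteq> 0" "norm q < 1"
  shows "(\<Sum>k. \<Sum>s\<in>S. theta_term q (N s) (int (Suc k)) * (1 - q powi int (Suc k)))
       = (\<Sum>s\<in>S. theta_tail q (N s) - theta_tail q (N s - 1))"
  by (intro sums_unique [symmetric] sums_sum sums_theta_term_mult_one_minus_power assms)

theorem lemma2:
  fixes q :: complex
  assumes "0 < norm q" and "norm q < 1"
  shows "(\<forall>n::int. n \<ge> 1 \<longrightarrow>
            (\<Sum>m\<in>{1..2*n}. (-1) ^ nat m * q powi (m * (m - 1) div 2 - m * n)) = 0)
       \<and> (\<forall>(n::int) (r::int). r \<ge> 0 \<longrightarrow>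
            (\<Sum>k. \<Sum>s\<in>{-r..r}. let m = int (Suc k) in
                (-1) ^ nat m * q powi (m * (m - 1) div 2 - m * (n + s)) * (1 - q powi m))
          = (\<Sum>k. \<Sum>s\<in>{-r..r}. let m = int (Suc k) in
                (-1) ^ nat m * q powi (m * (m - 1) div 2 - m * (- n + s)) * (1 - q powi m)))"
proof -
  have q: "q \<noteq> 0" "norm q < 1"
    using assms by auto
  let ?D = "\<lambda>N. theta_tail q N - theta_tail q (N - 1)"
  have series: "(\<Sum>k. \<Sum>s\<in>{-r..r}. let m = int (Suc k) in
                (-1) ^ nat m * q powi (m * (m - 1) div 2 - m * (n + s)) * (1 - q powi m))
        = (\<Sum>s\<in>{-r..r}. ?D (n + s))" for n r :: int
    using suminf_sum_theta_term_mult_one_minus_power [OF q, of "\<lambda>s. n + s" "{-r..r}"]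
    unfolding Let_def theta_term_def .
  have "(\<Sum>s\<in>{-r..r}. ?D (n + s)) = (\<Sum>s\<in>{-r..r}. ?D (n - s))" for n r :: int
    by (rule sum.reindex_bij_witness [where i = uminus and j = uminus]) auto
  also have "\<dots> n r = (\<Sum>s\<in>{-r..r}. ?D (- n + s))" for n r :: int
    using theta_tail_diff_minus [OF q, of "- n + s" for s] by (intro sum.cong) (simp_all add: algebra_simps)
  finally have symmetric: "(\<Sum>s\<in>{-r..r}. ?D (n + s)) = (\<Sum>s\<in>{-r..r}. ?D (- n + s))" for n r :: int .
  show ?thesis
    using sum_theta_term_eq_0 [of q] symmetric unfolding series theta_term_def by blast
qed

end
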